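(* Let $\mathcal{H}$ be a complex Hilbert space, let $A\in\mathcal{B}(\mathcal{H})$ be a nonzero positive operator, and let $P,Q,R,S\in\mathcal{B}_A(\mathcal{H})$. Then $$r_A(PQ+RS)\leq\frac12\big[\omega_A(QP)+\omega_A(SR)\big]+\frac12\sqrt{\big[\omega_A(QP)-\omega_A(SR)\big]^2+\big[\omega_A(QR+SP)+\omega_A(QR-SP)\big]^2}.$$
   Context: For a positive operator $A$ on $\mathcal{H}$, $\langle x,y\rangle_A:=\langle Ax,y\rangle$ and $\|x\|_A:=\sqrt{\langle x,x\rangle_A}$. $\mathcal{B}_A(\mathcal{H})$ is the set of $T\in\mathcal{B}(\mathcal{H})$ with $\mathcal{R}(T^*A)\subseteq\mathcal{R}(A)$. For $T$ bounded with respect to $\|\cdot\|_A$: $\|T\|_A:=\sup\{\|Tx\|_A:\|x\|_A=1\}$, $\omega_A(T):=\sup\{|\langle Tx,x\rangle_A|:\|x\|_A=1\}$, and the $A$-spectral radius $r_A(T):=\lim_{n\to\infty}\|T^n\|_A^{1/n}=\inf_{n\ge1}\|T^n\|_A^{1/n}$. *)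

theory Defs
  imports "HOL-Analysis.Analysis"
begin

text \<open>A complex Hilbert space is modelled on a type 'h with its additive group
structure, an explicit complex scalar multiplication sc and an inner product ip
(linear in the first argument, conjugate-linear in the second), complete for the
induced norm.\<close>

definition cinner_space :: "(complex \<Rightarrow> 'h::ab_group_add \<Rightarrow> 'h) \<Rightarrow> ('h \<Rightarrow> 'h \<Rightarrow> complex) \<Rightarrow> bool" where
  "cinner_space sc ip \<longleftrightarrow>
     (\<forall>x. sc 1 x = x) \<and>
     (\<forall>a b x. sc a (sc b x) = sc (a * b) x) \<and>
     (\<forall>a x y. sc a (x + y) = sc a x + sc a y) \<and>
     (\<forall>a b x. sc (a + b) x = sc a x + sc b x) \<and>
     (\<forall>x y z. ip (x + y) z = ip x z + ip y z) \<and>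
     (\<forall>a x y. ip (sc a x) y = a * ip x y) \<and>
     (\<forall>x y. ip y x = cnj (ip x y)) \<and>
     (\<forall>x. Im (ip x x) = 0 \<and> Re (ip x x) \<ge> 0) \<and>
     (\<forall>x. ip x x = 0 \<longrightarrow> x = 0)"

definition hnorm :: "('h \<Rightarrow> 'h \<Rightarrow> complex) \<Rightarrow> 'h \<Rightarrow> real" where
  "hnorm ip x = sqrt (Re (ip x x))"

definition complex_hilbert :: "(complex \<Rightarrow> 'h::ab_group_add \<Rightarrow> 'h) \<Rightarrow> ('h \<Rightarrow> 'h \<Rightarrow> complex) \<Rightarrow> bool" where
  "complex_hilbert sc ip \<longleftrightarrow> cinner_space sc ip \<and>
     (\<forall>X::nat \<Rightarrow> 'h. (\<forall>e>0. \<exists>N. \<forall>m\<ge>N. \<forall>n\<ge>N. hnorm ip (X m - X n) < e)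
        \<longrightarrow> (\<exists>L. (\<lambda>n. hnorm ip (X n - L)) \<longlonglongrightarrow> 0))"

definition bounded_op :: "(complex \<Rightarrow> 'h::ab_group_add \<Rightarrow> 'h) \<Rightarrow> ('h \<Rightarrow> 'h \<Rightarrow> complex) \<Rightarrow> ('h \<Rightarrow> 'h) \<Rightarrow> bool" where
  "bounded_op sc ip T \<longleftrightarrow>
     (\<forall>x y. T (x + y) = T x + T y) \<and> (\<forall>a x. T (sc a x) = sc a (T x)) \<and>
     (\<exists>C. \<forall>x. hnorm ip (T x) \<le> C * hnorm ip x)"

definition is_adjoint :: "('h \<Rightarrow> 'h \<Rightarrow> complex) \<Rightarrow> ('h \<Rightarrow> 'h) \<Rightarrow> ('h \<Rightarrow> 'h) \<Rightarrow> bool" where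
  "is_adjoint ip T T' \<longleftrightarrow> (\<forall>x y. ip (T x) y = ip x (T' y))"

definition positive_op :: "(complex \<Rightarrow> 'h::ab_group_add \<Rightarrow> 'h) \<Rightarrow> ('h \<Rightarrow> 'h \<Rightarrow> complex) \<Rightarrow> ('h \<Rightarrow> 'h) \<Rightarrow> bool" where
  "positive_op sc ip A \<longleftrightarrow> bounded_op sc ip A \<and>
     (\<forall>x. Im (ip (A x) x) = 0 \<and> Re (ip (A x) x) \<ge> 0)"

definition BA :: "(complex \<Rightarrow> 'h::ab_group_add \<Rightarrow> 'h) \<Rightarrow> ('h \<Rightarrow> 'h \<Rightarrow> complex) \<Rightarrow> ('h \<Rightarrow> 'h) \<Rightarrow> ('h \<Rightarrow> 'h) set" where
  "BA sc ip A = {T. bounded_op sc ip T \<and>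
     (\<exists>T'. is_adjoint ip T T' \<and> range (\<lambda>x. T' (A x)) \<subseteq> range A)}"

definition Anorm :: "('h \<Rightarrow> 'h \<Rightarrow> complex) \<Rightarrow> ('h \<Rightarrow> 'h) \<Rightarrow> 'h \<Rightarrow> real" where
  "Anorm ip A x = sqrt (Re (ip (A x) x))"

definition Aopnorm :: "('h \<Rightarrow> 'h \<Rightarrow> complex) \<Rightarrow> ('h \<Rightarrow> 'h) \<Rightarrow> ('h \<Rightarrow> 'h) \<Rightarrow> real" where
  "Aopnorm ip A T = Sup {Anorm ip A (T x) | x. Anorm ip A x = 1}"

definition Anumrad :: "('h \<Rightarrow> 'h \<Rightarrow> complex) \<Rightarrow> ('h \<Rightarrow> 'h) \<Rightarrow> ('h \<Rightarrow> 'h) \<Rightarrow> real" where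
  "Anumrad ip A T = Sup {cmod (ip (A (T x)) x) | x. Anorm ip A x = 1}"

definition Aspecrad :: "('h \<Rightarrow> 'h \<Rightarrow> complex) \<Rightarrow> ('h \<Rightarrow> 'h) \<Rightarrow> ('h \<Rightarrow> 'h) \<Rightarrow> real" where
  "Aspecrad ip A T = Inf {root n (Aopnorm ip A (T ^^ n)) | n. n \<ge> 1}"

end

theory Submission
  imports Defs
begin

(* Write PQ + RS = XY with Y = (Q, S) : H -> H (+) H and X = (P, R) : H (+) H -> H.
   Then (XY)^(n+1) = X (YX)^n Y, so ||(PQ + RS)^(n+1)||_A grows at most like
   ||(YX)^n||, and on any semi-inner product space ||M^n|| <= 2 w(M^n) <= 2 w(M)^n by
   polarization and Pearcy's power inequality.  Hence r_A(PQ + RS) <= w(YX), the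
   numerical radius of the operator matrix YX = ((QP, QR), (SP, SR)) for the A-semi-inner
   product on H (+) H, and splitting the off-diagonal part into (QR + SP) and (QR - SP)
   bounds w(YX) by the largest eigenvalue of a real symmetric 2x2 matrix.

   All of this needs the operators of B_A(H) to be bounded for the A-seminorm.  If
   T* A = A W, then K = W T is A-symmetric and ||Tx||_A^2 = <A K x, x>.  For an
   A-symmetric K the functionals u |-> <u, A K y> / ||A y|| are pointwise bounded,
   so uniform boundedness gives ||A K y|| <= C ||A y||; iterating
   ||K^m x||_A^2 <= ||K^(2m) x||_A ||x||_A then yields ||K x||_A <= C ||x||_A. *)

section \<open>Semi-inner products\<close>

lemma sq_le_of_quadratic_nonneg:
  fixes p q r :: real
  assumes r: "r \<ge> 0" and quad: "\<And>t. 0 \<le> p - 2 * t * q + t\<^sup>2 * r"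
  shows "q\<^sup>2 \<le> p * r"
proof (cases "r = 0")
  case True
  have "q = 0"
  proof (rule ccontr)
    assume "q \<noteq> 0"
    then show False
      using quad[of "(p + 1) / (2 * q)"] True by (simp add: field_simps)
  qed
  then show ?thesis
    using True by simp
next
  case False
  then have "0 \<le> p - q\<^sup>2 / r"
    using quad[of "q / r"] r by (simp add: field_simps power2_eq_square)
  then show ?thesis
    using False r by (simp add: field_simps)
qed

text \<open>The axioms of \<open>cinner_space\<close> without definiteness, so that \<open>\<langle>Ax, y\<rangle>\<close> for a positive
  \<open>A\<close> is an instance; \<open>hnorm\<close> is then only a seminorm.\<close>
locale semi_inner =
  fixes sc :: "complex \<Rightarrow> 'v::ab_group_add \<Rightarrow> 'v" and ip :: "'v \<Rightarrow> 'v \<Rightarrow> complex"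
  assumes scale_one: "\<And>x. sc 1 x = x"
    and scale_scale: "\<And>a b x. sc a (sc b x) = sc (a * b) x"
    and scale_add_right: "\<And>a x y. sc a (x + y) = sc a x + sc a y"
    and scale_add_left: "\<And>a b x. sc (a + b) x = sc a x + sc b x"
    and inner_add_left: "\<And>x y z. ip (x + y) z = ip x z + ip y z"
    and inner_scale_left: "\<And>a x y. ip (sc a x) y = a * ip x y"
    and inner_commute: "\<And>x y. ip y x = cnj (ip x y)"
    and inner_self_nonneg: "\<And>x. Im (ip x x) = 0 \<and> Re (ip x x) \<ge> 0"
begin

lemma scale_zero_left [simp]: "sc 0 x = 0"
  using scale_add_left[of 0 0 x] by simp

lemma scale_zero_right [simp]: "sc a 0 = 0"
  using scale_add_right[of a 0 0] by simp

lemma scale_minus_right: "sc a (- x) = - sc a x"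
  using scale_add_right[of a x "- x"] by (simp add: eq_neg_iff_add_eq_0 add.commute)

lemma scale_diff_right: "sc a (x - y) = sc a x - sc a y"
  using scale_add_right[of a x "- y"] by (simp add: scale_minus_right)

lemma scale_sum_right: "sc a (sum f S) = (\<Sum>i\<in>S. sc a (f i))"
  by (induction S rule: infinite_finite_induct) (auto simp: scale_add_right)

lemma scale_sum_left: "sc (sum f S) x = (\<Sum>i\<in>S. sc (f i) x)"
  by (induction S rule: infinite_finite_induct) (auto simp: scale_add_left)

lemma inner_zero_left [simp]: "ip 0 y = 0"
  using inner_add_left[of 0 0 y] by simp

lemma inner_minus_left: "ip (- x) y = - ip x y"
  using inner_add_left[of x "- x" y] by (simp add: eq_neg_iff_add_eq_0 add.commute)

lemma inner_diff_left: "ip (x - y) z = ip x z - ip y z"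
  using inner_add_left[of x "- y" z] by (simp add: inner_minus_left)

lemma inner_add_right: "ip z (x + y) = ip z x + ip z y"
  by (metis inner_commute inner_add_left complex_cnj_add)

lemma inner_scale_right: "ip x (sc a y) = cnj a * ip x y"
  by (metis inner_commute inner_scale_left complex_cnj_mult complex_cnj_cnj)

lemma inner_zero_right [simp]: "ip y 0 = 0"
  by (metis inner_zero_left inner_commute complex_cnj_zero)

lemma inner_diff_right: "ip z (x - y) = ip z x - ip z y"
  by (metis inner_commute inner_diff_left complex_cnj_diff)

lemma inner_sum_right: "ip y (sum f S) = (\<Sum>i\<in>S. ip y (f i))"
  by (induction S rule: infinite_finite_induct) (auto simp: inner_add_right)

lemma inner_minus_right: "ip z (- x) = - ip z x"
  by (metis inner_commute inner_minus_left complex_cnj_minus)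

lemma hnorm_nonneg [simp]: "hnorm ip x \<ge> 0"
  using inner_self_nonneg[of x] by (simp add: hnorm_def)

lemma hnorm_zero [simp]: "hnorm ip 0 = 0"
  by (simp add: hnorm_def)

lemma hnorm_sq: "hnorm ip x ^ 2 = Re (ip x x)"
  using inner_self_nonneg[of x] by (simp add: hnorm_def)

lemma inner_self: "ip x x = complex_of_real (hnorm ip x ^ 2)"
  using inner_self_nonneg[of x] by (simp add: hnorm_sq complex_eq_iff)

lemma norm_inner_self: "cmod (ip x x) = hnorm ip x ^ 2"
  unfolding inner_self norm_of_real by simp

lemma hnorm_scale: "hnorm ip (sc a x) = cmod a * hnorm ip x"
proof -
  have "ip (sc a x) (sc a x) = (cmod a)\<^sup>2 * ip x x"
    using complex_norm_square[of a]
    by (simp add: inner_scale_left inner_scale_right mult.assoc[symmetric] mult.commute[of "cnj a" a])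
  then have "Re (ip (sc a x) (sc a x)) = (cmod a)\<^sup>2 * Re (ip x x)"
    by (simp flip: of_real_power)
  then show ?thesis
    by (simp add: hnorm_def real_sqrt_mult)
qed

lemma hnorm_minus: "hnorm ip (- x) = hnorm ip x"
  by (simp add: hnorm_def inner_minus_left inner_minus_right)

lemma hnorm_add_sq: "hnorm ip (x + y) ^ 2 = hnorm ip x ^ 2 + hnorm ip y ^ 2 + 2 * Re (ip x y)"
proof -
  have "Re (ip y x) = Re (ip x y)"
    by (simp add: inner_commute[of x y])
  then show ?thesis
    by (simp add: hnorm_sq inner_add_left inner_add_right)
qed

lemma hnorm_diff_sq: "hnorm ip (x - y) ^ 2 = hnorm ip x ^ 2 + hnorm ip y ^ 2 - 2 * Re (ip x y)"
  using hnorm_add_sq[of x "- y"] by (simp add: hnorm_minus inner_minus_right)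

lemma norm_inner_le: "cmod (ip x y) \<le> hnorm ip x * hnorm ip y"
proof (cases "ip x y = 0")
  case False
  define u where "u = sgn (ip x y)"
  have "0 \<le> hnorm ip x ^ 2 - 2 * t * cmod (ip x y) + t\<^sup>2 * hnorm ip y ^ 2" for t :: real
  proof -
    have "cmod u = 1"
      using False by (simp add: u_def norm_sgn)
    moreover have "cnj u * ip x y = cmod (ip x y)"
    proof -
      have "cnj u * ip x y = ip x y * cnj (ip x y) / cmod (ip x y)"
        by (simp add: u_def sgn_eq)
      also have "\<dots> = of_real (cmod (ip x y)) * of_real (cmod (ip x y)) / of_real (cmod (ip x y))"
        using complex_norm_square[of "ip x y"] by (simp add: power2_eq_square)
      also have "\<dots> = cmod (ip x y)"
        using False by simp
      finally show ?thesis .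
    qed
    ultimately have "hnorm ip (x - sc (of_real t * u) y) ^ 2
        = hnorm ip x ^ 2 - 2 * t * cmod (ip x y) + t\<^sup>2 * hnorm ip y ^ 2"
      by (simp add: hnorm_diff_sq hnorm_scale inner_scale_right norm_mult power_mult_distrib mult.assoc)
    then show ?thesis
      by (metis zero_le_power2)
  qed
  then have "(cmod (ip x y))\<^sup>2 \<le> (hnorm ip x * hnorm ip y)\<^sup>2"
    unfolding power_mult_distrib by (intro sq_le_of_quadratic_nonneg) auto
  then show ?thesis
    by (rule power2_le_imp_le) simp
qed simp

lemma hnorm_triangle: "hnorm ip (x + y) \<le> hnorm ip x + hnorm ip y"
proof -
  have "Re (ip x y) \<le> hnorm ip x * hnorm ip y"
    using norm_inner_le[of x y] complex_Re_le_cmod[of "ip x y"] by linarith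
  then have "hnorm ip (x + y) ^ 2 \<le> (hnorm ip x + hnorm ip y) ^ 2"
    unfolding hnorm_add_sq power2_sum by linarith
  then show ?thesis
    by (rule power2_le_imp_le) simp
qed

end

section \<open>Numerical radius and the power inequality\<close>

lemma le_two_mult_if_le_scaled_sum:
  fixes X w a b :: real
  assumes w: "w \<ge> 0" and a: "a \<ge> 0" and b: "b \<ge> 0"
    and scaled: "\<And>t. t > 0 \<Longrightarrow> X \<le> w * (t\<^sup>2 * a\<^sup>2 + b\<^sup>2 / t\<^sup>2)"
  shows "X \<le> 2 * w * a * b"
proof (rule field_le_epsilon)
  fix e :: real
  assume e: "e > 0"
  define K where "K = w * (a + b)"
  have K: "K \<ge> 0"
    using w a b by (simp add: K_def)
  define \<delta> where "\<delta> = e / (K + 1)"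
  have \<delta>: "\<delta> > 0" "\<delta> * K \<le> e"
    using e K by (simp_all add: \<delta>_def field_simps)
  \<comment> \<open>Close to the optimal \<open>t\<^sup>2 = b/a\<close>, but defined also when \<open>a\<close> or \<open>b\<close> vanishes.\<close>
  define t where "t = sqrt ((b + \<delta>) / (a + \<delta>))"
  have t: "t > 0" "t\<^sup>2 = (b + \<delta>) / (a + \<delta>)"
    using \<delta> a b by (auto simp: t_def)
  have "t\<^sup>2 * a\<^sup>2 = a * (b + \<delta>) * (a / (a + \<delta>))"
    unfolding t(2) using \<delta> a by (simp add: field_simps power2_eq_square)
  also have "\<dots> \<le> a * (b + \<delta>)"
    using \<delta> a b by (intro mult_left_le) auto
  finally have "t\<^sup>2 * a\<^sup>2 \<le> a * (b + \<delta>)" .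
  moreover have "b\<^sup>2 / t\<^sup>2 = b * (a + \<delta>) * (b / (b + \<delta>))"
    unfolding t(2) using \<delta> b by (simp add: field_simps power2_eq_square)
  moreover have "\<dots> \<le> b * (a + \<delta>)"
    using \<delta> a b by (intro mult_left_le) auto
  ultimately have "t\<^sup>2 * a\<^sup>2 + b\<^sup>2 / t\<^sup>2 \<le> a * (b + \<delta>) + b * (a + \<delta>)"
    by linarith
  with scaled[OF t(1)] w have "X \<le> w * (a * (b + \<delta>) + b * (a + \<delta>))"
    by (meson mult_left_mono order_trans)
  also have "\<dots> = 2 * w * a * b + \<delta> * K"
    by (simp add: K_def algebra_simps)
  finally show "X \<le> 2 * w * a * b + e"
    using \<delta>(2) by linarith
qed

lemma cis_root_of_unity_power_n:
  assumes "n > 0"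
  shows "cis (2 * pi * real k / real n) ^ n = 1"
proof -
  have "cis (2 * pi * real k / real n) ^ n = cis (2 * pi * real k)"
    using assms by (simp add: Complex.DeMoivre)
  also have "\<dots> = 1"
    by (rule cis_multiple_2pi) simp
  finally show ?thesis .
qed

lemma sum_roots_of_unity_power:
  assumes "0 < i" "i < n"
  shows "(\<Sum>k<n. cis (2 * pi * real k / real n) ^ i) = 0"
proof -
  define r where "r = cis (2 * pi * real i / real n)"
  have power_eq: "cis (2 * pi * real k / real n) ^ i = r ^ k" for k
    unfolding r_def Complex.DeMoivre by (simp add: algebra_simps)
  have "r \<noteq> 1"
  proof
    assume "r = 1"
    then obtain m :: int where m: "2 * pi * real i / real n = real_of_int m * 2 * pi"
      by (auto simp: r_def complex_eq_iff cos_one_2pi_int)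
    have "real i / real n = (2 * pi * real i / real n) / (2 * pi)"
      by simp
    also have "\<dots> = real_of_int m"
      unfolding m by simp
    finally have "real i / real n = real_of_int m" .
    moreover have "0 < real i / real n" "real i / real n < 1"
      using assms by auto
    ultimately have "0 < m" and "m < 1"
      by simp_all
    then show False
      by simp
  qed
  moreover have "r ^ n = 1"
    using cis_root_of_unity_power_n[of n i] assms by (simp add: r_def)
  ultimately show ?thesis
    unfolding power_eq by (simp add: geometric_sum)
qed

lemma le_one_if_two_power_powers_bounded:
  fixes q B :: real
  assumes "\<And>j. q ^ (2 ^ j) \<le> B"
  shows "q \<le> 1"
proof (rule ccontr)
  assume "\<not> q \<le> 1"
  then have q: "q > 1"
    by simp
  obtain j where "B < q ^ j"
    using real_arch_pow[OF q] by blast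
  also have "q ^ j \<le> q ^ (2 ^ j)"
    using q by (intro power_increasing) (simp_all add: less_imp_le)
  finally show False
    using assms[of j] by simp
qed

context semi_inner
begin

definition linear_op :: "('v \<Rightarrow> 'v) \<Rightarrow> bool" where
  "linear_op B \<longleftrightarrow> (\<forall>x y. B (x + y) = B x + B y) \<and> (\<forall>a x. B (sc a x) = sc a (B x))"

definition numrad_le :: "('v \<Rightarrow> 'v) \<Rightarrow> real \<Rightarrow> bool" where
  "numrad_le B w \<longleftrightarrow> (\<forall>y. cmod (ip (B y) y) \<le> w * hnorm ip y ^ 2)"

lemma linear_op_add: "linear_op B \<Longrightarrow> B (x + y) = B x + B y"
  by (simp add: linear_op_def)

lemma linear_op_scale: "linear_op B \<Longrightarrow> B (sc a x) = sc a (B x)"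
  by (simp add: linear_op_def)

lemma linear_op_zero: "linear_op B \<Longrightarrow> B 0 = 0"
  using linear_op_add[of B 0 0] by simp

lemma linear_op_diff: "linear_op B \<Longrightarrow> B (x - y) = B x - B y"
  by (metis linear_op_add diff_add_cancel eq_diff_eq)

lemma linear_op_sum: "linear_op B \<Longrightarrow> B (sum f S) = (\<Sum>i\<in>S. B (f i))"
  by (induction S rule: infinite_finite_induct) (auto simp: linear_op_add linear_op_zero)

lemma linear_op_compose: "linear_op B \<Longrightarrow> linear_op C \<Longrightarrow> linear_op (\<lambda>x. B (C x))"
  by (simp add: linear_op_def)

lemma linear_op_plus: "linear_op B \<Longrightarrow> linear_op C \<Longrightarrow> linear_op (\<lambda>x. B x + C x)"
  by (simp add: linear_op_def scale_add_right algebra_simps)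

lemma linear_op_minus: "linear_op B \<Longrightarrow> linear_op C \<Longrightarrow> linear_op (\<lambda>x. B x - C x)"
  by (simp add: linear_op_def scale_diff_right algebra_simps)

lemma linear_op_funpow: "linear_op B \<Longrightarrow> linear_op (B ^^ n)"
  by (induction n) (simp_all add: linear_op_def)

lemma numrad_leD: "numrad_le B w \<Longrightarrow> cmod (ip (B y) y) \<le> w * hnorm ip y ^ 2"
  by (simp add: numrad_le_def)

lemma numrad_le_mono: "numrad_le B w \<Longrightarrow> w \<le> w' \<Longrightarrow> numrad_le B w'"
  unfolding numrad_le_def by (meson mult_right_mono zero_le_power2 order_trans)

lemma numrad_le_if_unit_sphere_bound:
  assumes B: "linear_op B" and unit: "\<And>x. hnorm ip x = 1 \<Longrightarrow> cmod (ip (B x) x) \<le> w"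
  shows "numrad_le B w"
  unfolding numrad_le_def
proof
  fix x
  show "cmod (ip (B x) x) \<le> w * hnorm ip x ^ 2"
  proof (cases "hnorm ip x = 0")
    case True
    then show ?thesis
      using norm_inner_le[of "B x" x] by simp
  next
    case False
    define t where "t = 1 / hnorm ip x"
    have t: "t > 0" "t * hnorm ip x = 1"
      using False by (simp_all add: t_def less_le)
    have "t\<^sup>2 * cmod (ip (B x) x) = cmod (ip (B (sc (of_real t) x)) (sc (of_real t) x))"
      using t by (simp add: linear_op_scale[OF B] inner_scale_left inner_scale_right norm_mult
          power2_eq_square)
    also have "\<dots> \<le> w"
      using t by (intro unit) (simp add: hnorm_scale)
    finally have "hnorm ip x ^ 2 * (t\<^sup>2 * cmod (ip (B x) x)) \<le> hnorm ip x ^ 2 * w"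
      by (rule mult_left_mono) simp
    moreover have "hnorm ip x ^ 2 * (t\<^sup>2 * cmod (ip (B x) x)) = cmod (ip (B x) x)"
      using t(2) by (simp add: power_mult_distrib[symmetric] mult.assoc[symmetric] mult.commute)
    ultimately show ?thesis
      by (simp add: mult.commute)
  qed
qed

definition hbounded :: "('v \<Rightarrow> 'v) \<Rightarrow> bool" where
  "hbounded B \<longleftrightarrow> (\<exists>L\<ge>0. \<forall>x. hnorm ip (B x) \<le> L * hnorm ip x)"

lemma hbounded_compose:
  assumes "hbounded B" and "hbounded C"
  shows "hbounded (\<lambda>x. B (C x))"
proof -
  obtain L1 L2 where "L1 \<ge> 0" "L2 \<ge> 0" and B: "\<And>x. hnorm ip (B x) \<le> L1 * hnorm ip x"
    and C: "\<And>x. hnorm ip (C x) \<le> L2 * hnorm ip x"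
    using assms by (auto simp: hbounded_def)
  then have "hnorm ip (B (C x)) \<le> (L1 * L2) * hnorm ip x" for x
    using order_trans[OF B[of "C x"] mult_left_mono[OF C[of x] \<open>L1 \<ge> 0\<close>]] by (simp add: mult.assoc)
  then show ?thesis
    using \<open>L1 \<ge> 0\<close> \<open>L2 \<ge> 0\<close> by (auto simp: hbounded_def intro!: exI[of _ "L1 * L2"])
qed

lemma hbounded_plus_minus:
  assumes "hbounded B" and "hbounded C"
  shows "hbounded (\<lambda>x. B x + C x)" and "hbounded (\<lambda>x. B x - C x)"
proof -
  obtain L1 L2 where "L1 \<ge> 0" "L2 \<ge> 0" and B: "\<And>x. hnorm ip (B x) \<le> L1 * hnorm ip x"
    and C: "\<And>x. hnorm ip (C x) \<le> L2 * hnorm ip x"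
    using assms by (auto simp: hbounded_def)
  have "hnorm ip (B x + C x) \<le> (L1 + L2) * hnorm ip x" for x
    using hnorm_triangle[of "B x" "C x"] B[of x] C[of x] by (simp add: distrib_right)
  moreover have "hnorm ip (B x - C x) \<le> (L1 + L2) * hnorm ip x" for x
    using hnorm_triangle[of "B x" "- C x"] B[of x] C[of x] by (simp add: distrib_right hnorm_minus)
  ultimately show "hbounded (\<lambda>x. B x + C x)" and "hbounded (\<lambda>x. B x - C x)"
    using \<open>L1 \<ge> 0\<close> \<open>L2 \<ge> 0\<close> by (auto simp: hbounded_def intro!: exI[of _ "L1 + L2"])
qed

lemma norm_cross_sum_le:
  assumes E: "linear_op E" and w: "w \<ge> 0" and Ew: "numrad_le E w"
  shows "cmod (ip (E v) u + ip (E u) v) \<le> 2 * w * hnorm ip u * hnorm ip v"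
proof -
  have parallelogram: "cmod (ip (E v) u + ip (E u) v) \<le> w * (hnorm ip u ^ 2 + hnorm ip v ^ 2)" for u v
  proof -
    have "2 * cmod (ip (E v) u + ip (E u) v) = cmod (2 * (ip (E v) u + ip (E u) v))"
      by (simp only: norm_mult norm_numeral)
    also have "2 * (ip (E v) u + ip (E u) v) = ip (E (u + v)) (u + v) - ip (E (u - v)) (u - v)"
      by (simp add: linear_op_add[OF E] linear_op_diff[OF E] inner_add_left inner_add_right
          inner_diff_left inner_diff_right algebra_simps)
    also have "cmod \<dots> \<le> w * hnorm ip (u + v) ^ 2 + w * hnorm ip (u - v) ^ 2"
      using Ew by (intro order_trans[OF norm_triangle_ineq4] add_mono) (auto simp: numrad_le_def)
    also have "\<dots> = 2 * w * (hnorm ip u ^ 2 + hnorm ip v ^ 2)"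
      by (simp add: hnorm_add_sq hnorm_diff_sq algebra_simps)
    finally show ?thesis
      by simp
  qed
  \<comment> \<open>The seminorms of \<open>u\<close> and \<open>v\<close> may vanish, so instead of normalizing we pass to
    \<open>tu\<close> and \<open>v/t\<close> and optimize over \<open>t\<close>.\<close>
  show ?thesis
  proof (rule le_two_mult_if_le_scaled_sum[OF w hnorm_nonneg hnorm_nonneg])
    fix t :: real
    assume t: "t > 0"
    have "ip (E v) u + ip (E u) v
        = ip (E (sc (of_real (1 / t)) v)) (sc (of_real t) u) + ip (E (sc (of_real t) u)) (sc (of_real (1 / t)) v)"
      using t by (simp add: linear_op_scale[OF E] inner_scale_left inner_scale_right)
    also have "cmod \<dots> \<le> w * (hnorm ip (sc (of_real t) u) ^ 2 + hnorm ip (sc (of_real (1 / t)) v) ^ 2)"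
      by (rule parallelogram)
    finally show "cmod (ip (E v) u + ip (E u) v) \<le> w * (t\<^sup>2 * hnorm ip u ^ 2 + hnorm ip v ^ 2 / t\<^sup>2)"
      using t by (simp add: hnorm_scale power_mult_distrib power_divide norm_divide)
  qed
qed

lemma norm_cross_diff_le:
  assumes E: "linear_op E" and w: "w \<ge> 0" and Ew: "numrad_le E w"
  shows "cmod (ip (E v) u - ip (E u) v) \<le> 2 * w * hnorm ip u * hnorm ip v"
proof -
  have "ip (E (sc \<i> v)) u + ip (E u) (sc \<i> v) = \<i> * (ip (E v) u - ip (E u) v)"
    by (simp add: linear_op_scale[OF E] inner_scale_left inner_scale_right algebra_simps)
  then have "cmod (ip (E v) u - ip (E u) v) = cmod (ip (E (sc \<i> v)) u + ip (E u) (sc \<i> v))"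
    by (simp add: norm_mult)
  also have "\<dots> \<le> 2 * w * hnorm ip u * hnorm ip (sc \<i> v)"
    by (rule norm_cross_sum_le[OF E w Ew])
  finally show ?thesis
    by (simp add: hnorm_scale)
qed

lemma norm_inner_le_two_numrad:
  assumes E: "linear_op E" and w: "w \<ge> 0" and Ew: "numrad_le E w"
  shows "cmod (ip (E v) u) \<le> 2 * w * hnorm ip u * hnorm ip v"
proof -
  have "2 * cmod (ip (E v) u) = cmod ((ip (E v) u + ip (E u) v) + (ip (E v) u - ip (E u) v))"
    by (simp flip: norm_mult)
  also have "\<dots> \<le> 2 * (2 * w * hnorm ip u * hnorm ip v)"
    using norm_cross_sum_le[OF assms, of v u] norm_cross_diff_le[OF assms, of v u]
    by (intro order_trans[OF norm_triangle_ineq]) simp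
  finally show ?thesis
    by simp
qed

lemma hnorm_le_two_numrad:
  assumes E: "linear_op E" and w: "w \<ge> 0" and Ew: "numrad_le E w"
  shows "hnorm ip (E v) \<le> 2 * w * hnorm ip v"
proof -
  have "hnorm ip (E v) * hnorm ip (E v) \<le> (2 * w * hnorm ip v) * hnorm ip (E v)"
    using norm_inner_le_two_numrad[OF assms, of v "E v"]
    by (simp add: norm_inner_self power2_eq_square mult_ac)
  then show ?thesis
    using w hnorm_nonneg[of "E v"] by (cases "hnorm ip (E v) = 0") (auto simp: mult_le_cancel_right)
qed

lemma norm_cross_terms_le:
  assumes E: "linear_op E" and F: "linear_op F"
    and e: "e \<ge> 0" and f: "f \<ge> 0"
    and sum: "numrad_le (\<lambda>x. E x + F x) e" and diff: "numrad_le (\<lambda>x. E x - F x) f"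
  shows "cmod (ip (E v) u + ip (F u) v) \<le> (e + f) * hnorm ip u * hnorm ip v"
proof -
  let ?G = "\<lambda>x. E x + F x" and ?H = "\<lambda>x. E x - F x"
  have "2 * cmod (ip (E v) u + ip (F u) v) = cmod (2 * (ip (E v) u + ip (F u) v))"
    by (simp only: norm_mult norm_numeral)
  also have "2 * (ip (E v) u + ip (F u) v) = (ip (?G v) u + ip (?G u) v) + (ip (?H v) u - ip (?H u) v)"
    by (simp add: inner_add_left inner_diff_left algebra_simps)
  also have "cmod \<dots> \<le> cmod (ip (?G v) u + ip (?G u) v) + cmod (ip (?H v) u - ip (?H u) v)"
    by (rule norm_triangle_ineq)
  also have "\<dots> \<le> 2 * e * hnorm ip u * hnorm ip v + 2 * f * hnorm ip u * hnorm ip v"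
    by (intro add_mono norm_cross_sum_le norm_cross_diff_le linear_op_plus linear_op_minus E F e f sum diff)
  finally show ?thesis
    by (simp add: algebra_simps)
qed

lemma geometric_sum_telescope:
  assumes M: "linear_op M"
  shows "(\<Sum>i<n. sc (c ^ i) ((M ^^ i) y)) - sc c (M (\<Sum>i<n. sc (c ^ i) ((M ^^ i) y)))
    = y - sc (c ^ n) ((M ^^ n) y)"
proof -
  define f where "f i = sc (c ^ i) ((M ^^ i) y)" for i
  have "sc c (M (\<Sum>i<n. f i)) = (\<Sum>i<n. f (Suc i))"
    by (simp add: f_def linear_op_sum[OF M] linear_op_scale[OF M] scale_sum_right scale_scale mult.commute)
  then have "(\<Sum>i<n. f i) - sc c (M (\<Sum>i<n. f i)) = (\<Sum>i<n. f i - f (Suc i))"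
    by (simp add: sum_subtractf)
  also have "\<dots> = f 0 - f n"
    by (rule sum_lessThan_telescope')
  finally have "(\<Sum>i<n. f i) - sc c (M (\<Sum>i<n. f i)) = f 0 - f n" .
  then show ?thesis
    by (simp add: f_def scale_one)
qed

lemma sum_roots_of_unity_geometric_sums:
  assumes n: "n > 0"
  shows "(\<Sum>k<n. \<Sum>i<n. sc ((cis (2 * pi * real k / real n) * z) ^ i) ((M ^^ i) y)) = sc (of_nat n) y"
proof -
  have "(\<Sum>k<n. sc ((cis (2 * pi * real k / real n) * z) ^ i) ((M ^^ i) y))
      = (if i = 0 then sc (of_nat n) y else 0)" if "i < n" for i
  proof -
    have "(\<Sum>k<n. (cis (2 * pi * real k / real n) * z) ^ i) = (if i = 0 then of_nat n else 0)"
      using sum_roots_of_unity_power[of i n] that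
      by (simp add: power_mult_distrib flip: sum_distrib_right)
    then show ?thesis
      by (simp add: scale_one flip: scale_sum_left)
  qed
  then have "(\<Sum>k<n. \<Sum>i<n. sc ((cis (2 * pi * real k / real n) * z) ^ i) ((M ^^ i) y))
      = (\<Sum>i<n. if i = 0 then sc (of_nat n) y else 0)"
    by (subst sum.swap) (auto intro!: sum.cong)
  then show ?thesis
    using n by simp
qed

text \<open>Pearcy's proof of the power inequality: averaging the resolvent identity
  \<open>(I - \<omega>zM)(\<Sum>\<^sub>i<n (\<omega>zM)\<^sup>i)y = y - z\<^sup>n M\<^sup>n y\<close> over the n-th roots of unity \<open>\<omega>\<close> isolates
  \<open>z\<^sup>n\<langle>M\<^sup>n y, y\<rangle>\<close>, while each summand has nonnegative real part because \<open>|z| \<mu> \<le> 1\<close>.\<close>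
lemma Re_power_inner_le:
  assumes M: "linear_op M" and \<mu>: "\<mu> > 0" and M\<mu>: "numrad_le M \<mu>"
    and n: "n > 0" and z: "cmod z * \<mu> \<le> 1"
  shows "Re (z ^ n * ip ((M ^^ n) y) y) \<le> hnorm ip y ^ 2"
proof -
  define \<omega> where "\<omega> k = cis (2 * pi * real k / real n)" for k
  define Y where "Y k = (\<Sum>i<n. sc ((\<omega> k * z) ^ i) ((M ^^ i) y))" for k
  define r where "r = y - sc (z ^ n) ((M ^^ n) y)"
  have resolvent: "Y k - sc (\<omega> k * z) (M (Y k)) = r" for k
    using geometric_sum_telescope[OF M, where n = n and c = "\<omega> k * z" and y = y]
      cis_root_of_unity_power_n[OF n, of k]
    by (simp add: Y_def r_def \<omega>_def power_mult_distrib)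
  have average: "(\<Sum>k<n. Y k) = sc (of_nat n) y"
    unfolding Y_def \<omega>_def by (rule sum_roots_of_unity_geometric_sums[OF n])
  have nonneg: "0 \<le> Re (ip (Y k - sc (\<omega> k * z) (M (Y k))) (Y k))" for k
  proof -
    have "cmod (\<omega> k * z * ip (M (Y k)) (Y k)) \<le> (cmod z * \<mu>) * hnorm ip (Y k) ^ 2"
      using numrad_leD[OF M\<mu>, of "Y k"] by (simp add: \<omega>_def norm_mult mult_left_mono mult.assoc)
    also have "\<dots> \<le> hnorm ip (Y k) ^ 2"
      using z \<mu> by (intro mult_left_le_one_le) auto
    finally have "Re (\<omega> k * z * ip (M (Y k)) (Y k)) \<le> hnorm ip (Y k) ^ 2"
      using complex_Re_le_cmod order_trans by blast
    then show ?thesis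
      by (simp add: inner_diff_left inner_scale_left hnorm_sq)
  qed
  have "(\<Sum>k<n. ip (Y k - sc (\<omega> k * z) (M (Y k))) (Y k)) = ip r (\<Sum>k<n. Y k)"
    by (simp add: resolvent inner_sum_right)
  also have "\<dots> = of_nat n * (ip y y - z ^ n * ip ((M ^^ n) y) y)"
    by (simp add: average r_def inner_diff_left inner_scale_left inner_scale_right)
  finally have sum_eq: "(\<Sum>k<n. ip (Y k - sc (\<omega> k * z) (M (Y k))) (Y k))
      = of_nat n * (ip y y - z ^ n * ip ((M ^^ n) y) y)" .
  have "0 \<le> Re (\<Sum>k<n. ip (Y k - sc (\<omega> k * z) (M (Y k))) (Y k))"
    unfolding Re_sum by (intro sum_nonneg nonneg)
  also have "\<dots> = real n * (Re (ip y y) - Re (z ^ n * ip ((M ^^ n) y) y))"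
    unfolding sum_eq by simp
  finally show ?thesis
    using n by (simp add: hnorm_sq zero_le_mult_iff)
qed

lemma numrad_le_funpow:
  assumes M: "linear_op M" and \<mu>: "\<mu> > 0" and M\<mu>: "numrad_le M \<mu>"
  shows "numrad_le (M ^^ n) (\<mu> ^ n)"
  unfolding numrad_le_def
proof
  fix y
  define c where "c = ip ((M ^^ n) y) y"
  show "cmod c \<le> \<mu> ^ n * hnorm ip y ^ 2"
  proof (cases "n = 0 \<or> c = 0")
    case True
    then show ?thesis
      using \<mu> by (auto simp: c_def norm_inner_self)
  next
    case False
    define z where "z = complex_of_real (1 / \<mu>) * cis (- Arg c / real n)"
    have "cmod z * \<mu> \<le> 1"
      using \<mu> by (simp add: z_def norm_mult norm_divide)
    moreover have "z ^ n * c = complex_of_real (cmod c / \<mu> ^ n)"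
    proof -
      have "z ^ n * c = complex_of_real (1 / \<mu> ^ n) * (cis (- Arg c) * (cmod c * cis (Arg c)))"
        using False by (simp add: z_def power_mult_distrib Complex.DeMoivre power_divide cis_Arg
            complex_sgn_def scaleR_conv_of_real mult_ac)
      also have "\<dots> = complex_of_real (cmod c / \<mu> ^ n)"
        by (simp add: cis_mult mult.left_commute)
      finally show ?thesis .
    qed
    ultimately have "cmod c / \<mu> ^ n \<le> hnorm ip y ^ 2"
      using Re_power_inner_le[OF M \<mu> M\<mu>, of n z y] False by (simp add: c_def)
    then show ?thesis
      using \<mu> by (simp add: divide_le_eq mult.commute)
  qed
qed

lemma hnorm_funpow_le:
  assumes "linear_op M" and "\<mu> > 0" and "numrad_le M \<mu>"
  shows "hnorm ip ((M ^^ n) y) \<le> 2 * \<mu> ^ n * hnorm ip y"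
  using assms by (intro hnorm_le_two_numrad linear_op_funpow numrad_le_funpow) auto

lemma symmetric_funpow:
  assumes "\<And>u v. ip (K u) v = ip u (K v)"
  shows "ip ((K ^^ m) u) v = ip u ((K ^^ m) v)"
proof (induction m arbitrary: u v)
  case (Suc m)
  then show ?case
    by (simp add: assms funpow_swap1)
qed simp

lemma symmetric_hnorm_funpow_sq_le:
  assumes sym: "\<And>u v. ip (K u) v = ip u (K v)"
  shows "hnorm ip ((K ^^ m) x) ^ 2 \<le> hnorm ip ((K ^^ (2 * m)) x) * hnorm ip x"
proof -
  have "hnorm ip ((K ^^ m) x) ^ 2 = Re (ip ((K ^^ m) ((K ^^ m) x)) x)"
    by (simp add: hnorm_sq symmetric_funpow[OF sym])
  also have "\<dots> \<le> cmod (ip ((K ^^ m) ((K ^^ m) x)) x)"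
    by (rule complex_Re_le_cmod)
  also have "\<dots> \<le> hnorm ip ((K ^^ m) ((K ^^ m) x)) * hnorm ip x"
    by (rule norm_inner_le)
  also have "(K ^^ m) ((K ^^ m) x) = (K ^^ (2 * m)) x"
    by (simp add: mult_2 funpow_add)
  finally show ?thesis .
qed

lemma symmetric_hnorm_ratio_power_le:
  assumes sym: "\<And>u v. ip (K u) v = ip u (K v)" and x: "hnorm ip x > 0"
  shows "(hnorm ip (K x) / hnorm ip x) ^ (2 ^ j) \<le> hnorm ip ((K ^^ (2 ^ j)) x) / hnorm ip x"
proof (induction j)
  case (Suc j)
  have "(hnorm ip (K x) / hnorm ip x) ^ (2 ^ Suc j) = ((hnorm ip (K x) / hnorm ip x) ^ (2 ^ j))\<^sup>2"
    by (simp add: power_mult[symmetric] mult.commute)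
  also have "\<dots> \<le> (hnorm ip ((K ^^ (2 ^ j)) x) / hnorm ip x)\<^sup>2"
    using Suc.IH by (intro power_mono) simp_all
  also have "\<dots> \<le> hnorm ip ((K ^^ (2 ^ Suc j)) x) / hnorm ip x"
    using symmetric_hnorm_funpow_sq_le[OF sym, of "2 ^ j" x] x
    by (simp add: power_divide power2_eq_square field_simps)
  finally show ?case .
qed simp

lemma hnorm_le_if_symmetric_orbit_bounded:
  assumes sym: "\<And>u v. ip (K u) v = ip u (K v)" and L: "L > 0"
    and orbit: "\<And>m. hnorm ip ((K ^^ m) x) \<le> D * L ^ m"
  shows "hnorm ip (K x) \<le> L * hnorm ip x"
proof (cases "hnorm ip x = 0")
  case True
  then have "hnorm ip (K x) ^ 2 \<le> 0"
    using symmetric_hnorm_funpow_sq_le[OF sym, of 1 x] by simp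
  then show ?thesis
    using L True by simp
next
  case False
  then have x: "hnorm ip x > 0"
    by (simp add: less_le)
  have "(hnorm ip (K x) / (L * hnorm ip x)) ^ (2 ^ j) \<le> D / hnorm ip x" for j
  proof -
    have "(hnorm ip (K x) / (L * hnorm ip x)) ^ (2 ^ j) = (hnorm ip (K x) / hnorm ip x) ^ (2 ^ j) / L ^ (2 ^ j)"
      by (simp add: power_divide power_mult_distrib field_simps)
    also have "\<dots> \<le> (hnorm ip ((K ^^ (2 ^ j)) x) / hnorm ip x) / L ^ (2 ^ j)"
      using symmetric_hnorm_ratio_power_le[OF sym x, of j] L by (intro divide_right_mono) simp_all
    also have "\<dots> \<le> (D * L ^ (2 ^ j) / hnorm ip x) / L ^ (2 ^ j)"
      using orbit[of "2 ^ j"] x L by (intro divide_right_mono) simp_all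
    also have "\<dots> = D / hnorm ip x"
      using L by simp
    finally show ?thesis .
  qed
  then have "hnorm ip (K x) / (L * hnorm ip x) \<le> 1"
    by (rule le_one_if_two_power_powers_bounded)
  then show ?thesis
    using L x by (simp add: field_simps)
qed

end

section \<open>Operator matrices on the direct sum\<close>

definition dsum_scale :: "(complex \<Rightarrow> 'v \<Rightarrow> 'v) \<Rightarrow> complex \<Rightarrow> 'v \<times> 'v \<Rightarrow> 'v \<times> 'v" where
  "dsum_scale sc a p = (sc a (fst p), sc a (snd p))"

definition dsum_inner :: "('v \<Rightarrow> 'v \<Rightarrow> complex) \<Rightarrow> 'v \<times> 'v \<Rightarrow> 'v \<times> 'v \<Rightarrow> complex" where
  "dsum_inner ip p q = ip (fst p) (fst q) + ip (snd p) (snd q)"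

lemma quadratic_form_le_max_eigenvalue:
  fixes a d g s t :: real
  shows "a * s\<^sup>2 + d * t\<^sup>2 + g * s * t \<le> ((a + d) / 2 + sqrt ((a - d)\<^sup>2 + g\<^sup>2) / 2) * (s\<^sup>2 + t\<^sup>2)"
proof -
  define r where "r = sqrt ((a - d)\<^sup>2 + g\<^sup>2)"
  have "\<bar>a - d\<bar> \<le> r"
    unfolding r_def by (rule real_le_rsqrt) simp
  then have \<alpha>: "(d - a + r) / 2 \<ge> 0" and \<beta>: "(a - d + r) / 2 \<ge> 0"
    by auto
  define \<alpha> \<beta> where "\<alpha> = (d - a + r) / 2" and "\<beta> = (a - d + r) / 2"
  have "r\<^sup>2 = (a - d)\<^sup>2 + g\<^sup>2"
    unfolding r_def by simp
  then have \<alpha>\<beta>: "4 * (\<alpha> * \<beta>) = g\<^sup>2"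
    unfolding \<alpha>_def \<beta>_def by (simp add: algebra_simps power2_eq_square)
  have "g * s * t \<le> \<alpha> * s\<^sup>2 + \<beta> * t\<^sup>2"
  proof (cases "\<alpha> = 0")
    case True
    then show ?thesis
      using \<alpha>\<beta> \<beta> by (simp add: \<beta>_def)
  next
    case False
    then have "\<alpha> > 0"
      using \<alpha> by (simp add: \<alpha>_def)
    have "\<alpha> * (\<alpha> * s\<^sup>2 + \<beta> * t\<^sup>2 - g * s * t) = (\<alpha> * s - g * t / 2)\<^sup>2 + (\<alpha> * \<beta> - g\<^sup>2 / 4) * t\<^sup>2"
      by (simp add: algebra_simps power2_eq_square)
    also have "\<alpha> * \<beta> - g\<^sup>2 / 4 = 0"
      using \<alpha>\<beta> by simp
    finally have "0 \<le> \<alpha> * (\<alpha> * s\<^sup>2 + \<beta> * t\<^sup>2 - g * s * t)"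
      by simp
    then show ?thesis
      using \<open>\<alpha> > 0\<close> by (simp add: zero_le_mult_iff)
  qed
  moreover have "((a + d) / 2 + r / 2) * (s\<^sup>2 + t\<^sup>2) = a * s\<^sup>2 + d * t\<^sup>2 + (\<alpha> * s\<^sup>2 + \<beta> * t\<^sup>2)"
    by (simp add: \<alpha>_def \<beta>_def field_simps)
  ultimately show ?thesis
    unfolding r_def by linarith
qed

context semi_inner
begin

lemma semi_inner_dsum: "semi_inner (dsum_scale sc) (dsum_inner ip)"
proof unfold_locales
  fix x y z :: "'v \<times> 'v" and a b :: complex
  show "dsum_scale sc 1 x = x" "dsum_scale sc a (dsum_scale sc b x) = dsum_scale sc (a * b) x"
    "dsum_scale sc a (x + y) = dsum_scale sc a x + dsum_scale sc a y"
    "dsum_scale sc (a + b) x = dsum_scale sc a x + dsum_scale sc b x"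
    by (simp_all add: dsum_scale_def scale_one scale_scale scale_add_right scale_add_left)
  show "dsum_inner ip (x + y) z = dsum_inner ip x z + dsum_inner ip y z"
    "dsum_inner ip (dsum_scale sc a x) y = a * dsum_inner ip x y"
    by (simp_all add: dsum_inner_def dsum_scale_def inner_add_left inner_scale_left algebra_simps)
  show "dsum_inner ip y x = cnj (dsum_inner ip x y)"
    using inner_commute[of "fst x" "fst y"] inner_commute[of "snd x" "snd y"] by (simp add: dsum_inner_def)
  show "Im (dsum_inner ip x x) = 0 \<and> 0 \<le> Re (dsum_inner ip x x)"
    using inner_self_nonneg[of "fst x"] inner_self_nonneg[of "snd x"] by (simp add: dsum_inner_def)
qed

lemma hnorm_dsum_sq: "hnorm (dsum_inner ip) p ^ 2 = hnorm ip (fst p) ^ 2 + hnorm ip (snd p) ^ 2"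
  using semi_inner.hnorm_sq[OF semi_inner_dsum] by (simp add: dsum_inner_def hnorm_sq)

lemma hnorm_dsum_bounds:
  shows "hnorm ip (fst p) \<le> hnorm (dsum_inner ip) p" and "hnorm ip (snd p) \<le> hnorm (dsum_inner ip) p"
    and "hnorm (dsum_inner ip) p \<le> hnorm ip (fst p) + hnorm ip (snd p)"
proof -
  have nonneg: "hnorm (dsum_inner ip) p \<ge> 0"
    by (rule semi_inner.hnorm_nonneg[OF semi_inner_dsum])
  show "hnorm ip (fst p) \<le> hnorm (dsum_inner ip) p" "hnorm ip (snd p) \<le> hnorm (dsum_inner ip) p"
    by (rule power2_le_imp_le, simp add: hnorm_dsum_sq, rule nonneg)+
  have "hnorm (dsum_inner ip) p ^ 2 \<le> (hnorm ip (fst p) + hnorm ip (snd p)) ^ 2"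
    by (simp add: hnorm_dsum_sq power2_sum)
  then show "hnorm (dsum_inner ip) p \<le> hnorm ip (fst p) + hnorm ip (snd p)"
    by (rule power2_le_imp_le) simp
qed

lemma linear_op_block:
  assumes P: "linear_op P" and Q: "linear_op Q" and R: "linear_op R" and S: "linear_op S"
  shows "semi_inner.linear_op (dsum_scale sc)
    (\<lambda>p. (Q (P (fst p) + R (snd p)), S (P (fst p) + R (snd p))))"
proof -
  interpret D: semi_inner "dsum_scale sc" "dsum_inner ip"
    by (rule semi_inner_dsum)
  show ?thesis
    by (simp add: D.linear_op_def dsum_scale_def linear_op_add[OF P] linear_op_add[OF Q]
        linear_op_add[OF R] linear_op_add[OF S] linear_op_scale[OF P] linear_op_scale[OF Q]
        linear_op_scale[OF R] linear_op_scale[OF S] scale_add_right algebra_simps)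
qed

text \<open>The map below is the operator matrix \<open>((QP, QR), (SP, SR)) = (Q, S)\<^sup>T (P, R)\<close> on
  \<open>H \<oplus> H\<close>; its numerical radius is bounded by the largest eigenvalue of the real symmetric
  matrix \<open>((a, (e + f)/2), ((e + f)/2, d))\<close>.\<close>
lemma numrad_le_block:
  assumes P: "linear_op P" and Q: "linear_op Q" and R: "linear_op R" and S: "linear_op S"
    and QP: "numrad_le (\<lambda>x. Q (P x)) a" and SR: "numrad_le (\<lambda>x. S (R x)) d"
    and sum: "numrad_le (\<lambda>x. Q (R x) + S (P x)) e" and diff: "numrad_le (\<lambda>x. Q (R x) - S (P x)) f"
    and "e \<ge> 0" and "f \<ge> 0"
  shows "semi_inner.numrad_le (dsum_inner ip)
    (\<lambda>p. (Q (P (fst p) + R (snd p)), S (P (fst p) + R (snd p))))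
    ((a + d) / 2 + sqrt ((a - d)\<^sup>2 + (e + f)\<^sup>2) / 2)"
proof -
  interpret D: semi_inner "dsum_scale sc" "dsum_inner ip"
    by (rule semi_inner_dsum)
  have "cmod (dsum_inner ip (Q (P u + R v), S (P u + R v)) (u, v))
      \<le> ((a + d) / 2 + sqrt ((a - d)\<^sup>2 + (e + f)\<^sup>2) / 2) * hnorm (dsum_inner ip) (u, v) ^ 2" for u v
  proof -
    have "dsum_inner ip (Q (P u + R v), S (P u + R v)) (u, v)
        = ip (Q (P u)) u + ip (S (R v)) v + (ip (Q (R v)) u + ip (S (P u)) v)"
      by (simp add: dsum_inner_def linear_op_add[OF Q] linear_op_add[OF S] inner_add_left)
    also have "cmod \<dots> \<le> cmod (ip (Q (P u)) u) + cmod (ip (S (R v)) v)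
        + cmod (ip (Q (R v)) u + ip (S (P u)) v)"
      by (meson add_mono norm_triangle_ineq order_refl order_trans)
    also have "\<dots> \<le> a * hnorm ip u ^ 2 + d * hnorm ip v ^ 2 + (e + f) * hnorm ip u * hnorm ip v"
      using numrad_leD[OF QP, of u] numrad_leD[OF SR, of v]
        norm_cross_terms_le[OF linear_op_compose[OF Q R] linear_op_compose[OF S P] assms(9,10) sum diff]
      by (intro add_mono)
    also have "\<dots> \<le> ((a + d) / 2 + sqrt ((a - d)\<^sup>2 + (e + f)\<^sup>2) / 2) * (hnorm ip u ^ 2 + hnorm ip v ^ 2)"
      using quadratic_form_le_max_eigenvalue by (simp add: mult.assoc)
    finally show ?thesis
      by (simp add: hnorm_dsum_sq)
  qed
  then show ?thesis
    unfolding D.numrad_le_def by auto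
qed

lemma hbounded_block_row:
  assumes "hbounded P" and "hbounded R"
  shows "\<exists>L\<ge>0. \<forall>q. hnorm ip (P (fst q) + R (snd q)) \<le> L * hnorm (dsum_inner ip) q"
proof -
  obtain L1 L2 where L: "L1 \<ge> 0" "L2 \<ge> 0" and P: "\<And>x. hnorm ip (P x) \<le> L1 * hnorm ip x"
    and R: "\<And>x. hnorm ip (R x) \<le> L2 * hnorm ip x"
    using assms by (auto simp: hbounded_def)
  have "hnorm ip (P (fst q) + R (snd q)) \<le> (L1 + L2) * hnorm (dsum_inner ip) q" for q
  proof -
    have "hnorm ip (P (fst q) + R (snd q)) \<le> L1 * hnorm ip (fst q) + L2 * hnorm ip (snd q)"
      using hnorm_triangle P[of "fst q"] R[of "snd q"] by (meson add_mono order_trans)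
    also have "\<dots> \<le> L1 * hnorm (dsum_inner ip) q + L2 * hnorm (dsum_inner ip) q"
      using L hnorm_dsum_bounds(1,2)[of q] by (intro add_mono mult_left_mono)
    finally show ?thesis
      by (simp add: distrib_right)
  qed
  then show ?thesis
    using L by (intro exI[of _ "L1 + L2"]) auto
qed

lemma hbounded_block_column:
  assumes "hbounded Q" and "hbounded S"
  shows "\<exists>L\<ge>0. \<forall>x. hnorm (dsum_inner ip) (Q x, S x) \<le> L * hnorm ip x"
proof -
  obtain L1 L2 where L: "L1 \<ge> 0" "L2 \<ge> 0" and Q: "\<And>x. hnorm ip (Q x) \<le> L1 * hnorm ip x"
    and S: "\<And>x. hnorm ip (S x) \<le> L2 * hnorm ip x"
    using assms by (auto simp: hbounded_def)
  have "hnorm (dsum_inner ip) (Q x, S x) \<le> (L1 + L2) * hnorm ip x" for x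
    using hnorm_dsum_bounds(3)[of "(Q x, S x)"] Q[of x] S[of x] by (simp add: distrib_right)
  then show ?thesis
    using L by (intro exI[of _ "L1 + L2"]) auto
qed

end

section \<open>Uniform boundedness\<close>

locale hilbert =
  fixes sc :: "complex \<Rightarrow> 'h::ab_group_add \<Rightarrow> 'h" and ip :: "'h \<Rightarrow> 'h \<Rightarrow> complex"
  assumes complex_hilbert: "complex_hilbert sc ip"
begin

lemma cinner_space: "cinner_space sc ip"
  using complex_hilbert by (simp add: complex_hilbert_def)

sublocale semi_inner sc ip
  using cinner_space unfolding cinner_space_def semi_inner_def by (elim conjE) (intro conjI; assumption)

lemma hnorm_eq_0D:
  assumes "hnorm ip x = 0"
  shows "x = 0"
proof -
  have "ip x x = 0"
    using assms by (simp add: inner_self)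
  moreover have "\<forall>x. ip x x = 0 \<longrightarrow> x = 0"
    using cinner_space unfolding cinner_space_def by (elim conjE)
  ultimately show ?thesis
    by blast
qed

lemma hnorm_pos: "x \<noteq> 0 \<Longrightarrow> hnorm ip x > 0"
  using hnorm_eq_0D[of x] hnorm_nonneg[of x] by linarith

lemma eq_0_if_inner_left_eq_0:
  assumes "\<And>v. ip u v = 0"
  shows "u = 0"
  using assms[of u] hnorm_eq_0D[of u] by (simp add: inner_self)

lemma Metric_space_hnorm: "Metric_space UNIV (\<lambda>x y. hnorm ip (x - y))"
proof
  show "hnorm ip (x - y) = hnorm ip (y - x)" for x y
    using hnorm_minus[of "x - y"] by simp
  show "hnorm ip (x - y) = 0 \<longleftrightarrow> x = y" for x y
    using hnorm_eq_0D[of "x - y"] by auto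
  show "hnorm ip (x - z) \<le> hnorm ip (x - y) + hnorm ip (y - z)" for x y z
    using hnorm_triangle[of "x - y" "y - z"] by simp
qed simp

lemma mcomplete_hnorm: "Metric_space.mcomplete UNIV (\<lambda>x y. hnorm ip (x - y))"
proof -
  interpret dist: Metric_space UNIV "\<lambda>x y. hnorm ip (x - y)"
    by (rule Metric_space_hnorm)
  show ?thesis
    unfolding dist.mcomplete_def
  proof (intro allI impI)
    fix \<sigma>
    assume "dist.MCauchy \<sigma>"
    then have "\<forall>e>0. \<exists>N. \<forall>m\<ge>N. \<forall>n\<ge>N. hnorm ip (\<sigma> m - \<sigma> n) < e"
      unfolding dist.MCauchy_def by meson
    then obtain L where L: "(\<lambda>n. hnorm ip (\<sigma> n - L)) \<longlonglongrightarrow> 0"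
      using complex_hilbert[unfolded complex_hilbert_def, THEN conjunct2] by blast
    have "\<forall>e>0. \<exists>N. \<forall>n\<ge>N. hnorm ip (\<sigma> n - L) < e"
      using LIMSEQ_D[OF L] by simp
    then show "\<exists>x. limitin dist.mtopology \<sigma> x sequentially"
      unfolding dist.limit_metric_sequentially by auto
  qed
qed

lemma closedin_uniform_sublevel_set:
  fixes \<phi> :: "'i \<Rightarrow> 'h \<Rightarrow> complex"
  assumes add: "\<And>i x y. i \<in> I \<Longrightarrow> \<phi> i (x + y) = \<phi> i x + \<phi> i y"
    and bounded: "\<And>i. i \<in> I \<Longrightarrow> \<exists>C. \<forall>x. cmod (\<phi> i x) \<le> C * hnorm ip x"
  shows "closedin (Metric_space.mtopology UNIV (\<lambda>x y. hnorm ip (x - y))) {x. \<forall>i\<in>I. cmod (\<phi> i x) \<le> c}"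
proof -
  interpret dist: Metric_space UNIV "\<lambda>x y. hnorm ip (x - y)"
    by (rule Metric_space_hnorm)
  let ?F = "{x. \<forall>i\<in>I. cmod (\<phi> i x) \<le> c}"
  show ?thesis
    unfolding closedin_def dist.openin_mtopology dist.topspace_mtopology
  proof (intro conjI allI impI subset_UNIV)
    fix x
    assume "x \<in> UNIV - ?F"
    then obtain i where i: "i \<in> I" and big: "cmod (\<phi> i x) > c"
      by (auto simp: not_le)
    obtain C0 where C0: "\<And>x. cmod (\<phi> i x) \<le> C0 * hnorm ip x"
      using bounded[OF i] by blast
    define C where "C = max C0 0 + 1"
    have C: "C > 0" "C0 \<le> C"
      by (simp_all add: C_def max_def)
    then have Cb: "cmod (\<phi> i y) \<le> C * hnorm ip y" for y
      using C0[of y] mult_right_mono[of C0 C "hnorm ip y"] by simp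
    define r where "r = (cmod (\<phi> i x) - c) / C"
    have "r > 0"
      using C big by (simp add: r_def)
    moreover have "dist.mball x r \<subseteq> UNIV - ?F"
    proof
      fix y
      assume "y \<in> dist.mball x r"
      then have "C * hnorm ip (x - y) < cmod (\<phi> i x) - c"
        using C by (simp add: r_def field_simps)
      moreover have "\<phi> i x = \<phi> i (x - y) + \<phi> i y"
        using add[OF i, of "x - y" y] by simp
      then have "cmod (\<phi> i x) \<le> C * hnorm ip (x - y) + cmod (\<phi> i y)"
        using Cb[of "x - y"] norm_triangle_ineq[of "\<phi> i (x - y)" "\<phi> i y"] by simp
      ultimately have "cmod (\<phi> i y) > c"
        by linarith
      then show "y \<in> UNIV - ?F"
        using i by (auto simp: not_le)
    qed
    ultimately show "\<exists>r>0. dist.mball x r \<subseteq> UNIV - ?F"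
      by blast
  qed
qed

lemma Baire_bounded_on_ball:
  fixes \<phi> :: "'i \<Rightarrow> 'h \<Rightarrow> complex"
  assumes add: "\<And>i x y. i \<in> I \<Longrightarrow> \<phi> i (x + y) = \<phi> i x + \<phi> i y"
    and bounded: "\<And>i. i \<in> I \<Longrightarrow> \<exists>C. \<forall>x. cmod (\<phi> i x) \<le> C * hnorm ip x"
    and pointwise: "\<And>x. \<exists>K. \<forall>i\<in>I. cmod (\<phi> i x) \<le> K"
  shows "\<exists>k x0 r. r > 0 \<and> (\<forall>i\<in>I. \<forall>x. hnorm ip (x0 - x) < r \<longrightarrow> cmod (\<phi> i x) \<le> k)"
proof -
  interpret dist: Metric_space UNIV "\<lambda>x y. hnorm ip (x - y)"
    by (rule Metric_space_hnorm)
  define F where "F k = {x. \<forall>i\<in>I. cmod (\<phi> i x) \<le> real k}" for k :: nat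
  have closed: "closedin dist.mtopology (F k)" for k
    unfolding F_def using add bounded by (rule closedin_uniform_sublevel_set)
  have cover: "\<Union>(range F) = UNIV"
  proof -
    have "x \<in> F (nat \<lceil>K\<rceil>)" if K: "\<forall>i\<in>I. cmod (\<phi> i x) \<le> K" for x K
      unfolding F_def
    proof (intro CollectI ballI)
      fix i
      assume "i \<in> I"
      then show "cmod (\<phi> i x) \<le> real (nat \<lceil>K\<rceil>)"
        using K real_nat_ceiling_ge[of K] by (meson order_trans)
    qed
    then have "x \<in> \<Union>(range F)" for x
      using pointwise[of x] by blast
    then show ?thesis
      by blast
  qed
  obtain k where "dist.mtopology interior_of F k \<noteq> {}"
  proof (rule ccontr)
    assume "\<not> thesis"
    then have empty: "dist.mtopology interior_of F k = {}" for k
      using that by blast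
    have "dist.mtopology interior_of \<Union>(range F) = {}"
      by (rule dist.metric_Baire_category_alt[OF mcomplete_hnorm]) (use closed empty in auto)
    then show False
      using cover interior_of_topspace[of dist.mtopology] dist.topspace_mtopology by simp
  qed
  then obtain x0 where x0: "x0 \<in> dist.mtopology interior_of F k"
    by blast
  have "openin dist.mtopology (dist.mtopology interior_of F k)"
    by simp
  then obtain r where r: "r > 0" and sub: "dist.mball x0 r \<subseteq> dist.mtopology interior_of F k"
    using x0 unfolding dist.openin_mtopology by blast
  have ball: "dist.mball x0 r \<subseteq> F k"
    using sub interior_of_subset[of dist.mtopology "F k"] by (rule subset_trans)
  have "cmod (\<phi> i x) \<le> real k" if i: "i \<in> I" and x: "hnorm ip (x0 - x) < r" for i x
  proof -
    have "x \<in> F k"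
      using x ball by (auto simp: dist.in_mball)
    then show ?thesis
      using i by (simp add: F_def)
  qed
  then show ?thesis
    using r by blast
qed

lemma bounded_near_zero_if_bounded_on_ball:
  assumes add: "\<And>x y. \<phi> (x + y) = \<phi> x + \<phi> y"
    and ball: "\<And>x. hnorm ip (x0 - x) < r \<Longrightarrow> cmod (\<phi> x) \<le> k" and x: "hnorm ip x < r"
  shows "cmod (\<phi> x) \<le> 2 * k"
proof -
  have "r > 0"
    using x hnorm_nonneg[of x] by linarith
  then have "cmod (\<phi> (x0 + x)) \<le> k" and "cmod (\<phi> x0) \<le> k"
    using ball[of "x0 + x"] ball[of x0] x by (simp_all add: hnorm_minus)
  moreover have "cmod (\<phi> x) \<le> cmod (\<phi> (x0 + x)) + cmod (\<phi> x0)"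
    using add[of x0 x] by (metis add_diff_cancel_left' norm_triangle_ineq4)
  ultimately show ?thesis
    by linarith
qed

theorem uniform_boundedness:
  fixes \<phi> :: "'i \<Rightarrow> 'h \<Rightarrow> complex"
  assumes add: "\<And>i x y. i \<in> I \<Longrightarrow> \<phi> i (x + y) = \<phi> i x + \<phi> i y"
    and hom: "\<And>i a x. i \<in> I \<Longrightarrow> \<phi> i (sc (of_real a) x) = of_real a * \<phi> i x"
    and bounded: "\<And>i. i \<in> I \<Longrightarrow> \<exists>C. \<forall>x. cmod (\<phi> i x) \<le> C * hnorm ip x"
    and pointwise: "\<And>x. \<exists>K. \<forall>i\<in>I. cmod (\<phi> i x) \<le> K"
  shows "\<exists>C. \<forall>i\<in>I. \<forall>x. cmod (\<phi> i x) \<le> C * hnorm ip x"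
proof -
  obtain k x0 r where r: "r > 0"
    and ball: "\<And>i x. i \<in> I \<Longrightarrow> hnorm ip (x0 - x) < r \<Longrightarrow> cmod (\<phi> i x) \<le> k"
    using Baire_bounded_on_ball[OF add bounded pointwise] by blast
  have small: "cmod (\<phi> i x) \<le> 2 * k" if i: "i \<in> I" and "hnorm ip x < r" for i x
    using add[OF i] ball[OF i] that(2) by (rule bounded_near_zero_if_bounded_on_ball)
  have "cmod (\<phi> i x) \<le> (4 * k / r) * hnorm ip x" if i: "i \<in> I" for i x
  proof (cases "hnorm ip x = 0")
    case True
    then show ?thesis
      using add[OF i, of 0 0] hnorm_eq_0D[OF True] by simp
  next
    case False
    then have x: "hnorm ip x > 0"
      using hnorm_nonneg[of x] by linarith
    define t where "t = r / (2 * hnorm ip x)"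
    have t: "t > 0"
      using r x by (simp add: t_def)
    have "hnorm ip (sc (of_real t) x) = t * hnorm ip x"
      using t by (simp add: hnorm_scale)
    also have "\<dots> = r / 2"
      using x by (simp add: t_def)
    finally have "hnorm ip (sc (of_real t) x) < r"
      using r by simp
    have "t * cmod (\<phi> i x) = cmod (\<phi> i (sc (of_real t) x))"
      using hom[OF i, of t x] t by (simp add: norm_mult)
    also have "\<dots> \<le> 2 * k"
      using small[OF i] \<open>hnorm ip (sc (of_real t) x) < r\<close> .
    finally have "t * cmod (\<phi> i x) \<le> 2 * k" .
    then show ?thesis
      using r x t by (simp add: t_def field_simps)
  qed
  then show ?thesis
    by blast
qed

end

section \<open>The semi-inner product induced by a positive operator\<close>

locale positive_weight = hilbert sc ip
  for sc :: "complex \<Rightarrow> 'h::ab_group_add \<Rightarrow> 'h" and ip +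
  fixes A :: "'h \<Rightarrow> 'h"
  assumes positive: "positive_op sc ip A"
begin

lemma linear_A: "linear_op A"
  using positive by (simp add: positive_op_def bounded_op_def linear_op_def)

lemma inner_A_self: "Im (ip (A x) x) = 0 \<and> Re (ip (A x) x) \<ge> 0"
  using positive by (simp add: positive_op_def)

lemma inner_A_commute: "ip (A y) x = cnj (ip (A x) y)"
proof -
  have real: "Im (ip (A z) z) = 0" for z
    using inner_A_self by blast
  define p q where "p = ip (A x) y" and "q = ip (A y) x"
  have "ip (A (x + y)) (x + y) = ip (A x) x + ip (A y) y + p + q"
    by (simp add: p_def q_def linear_op_add[OF linear_A] inner_add_left inner_add_right)
  then have "Im p + Im q = 0"
    using real[of "x + y"] real[of x] real[of y] by simp
  moreover have "ip (A (x + sc \<i> y)) (x + sc \<i> y) = ip (A x) x + ip (A y) y - \<i> * p + \<i> * q"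
    by (simp add: p_def q_def linear_op_add[OF linear_A] linear_op_scale[OF linear_A]
        inner_add_left inner_add_right inner_scale_left inner_scale_right algebra_simps)
  then have "Re q - Re p = 0"
    using real[of "x + sc \<i> y"] real[of x] real[of y] by simp
  ultimately show ?thesis
    by (simp add: p_def q_def complex_eq_iff)
qed

sublocale A: semi_inner sc "\<lambda>x y. ip (A x) y"
  rewrites "hnorm (\<lambda>x y. ip (A x) y) = Anorm ip A"
proof -
  show "semi_inner sc (\<lambda>x y. ip (A x) y)"
  proof unfold_locales
    show "ip (A y) x = cnj (ip (A x) y)" for x y
      by (rule inner_A_commute)
  qed (simp_all add: linear_op_add[OF linear_A] linear_op_scale[OF linear_A]
      inner_add_left inner_scale_left inner_A_self scale_one scale_scale
      scale_add_right scale_add_left)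
  show "hnorm (\<lambda>x y. ip (A x) y) = Anorm ip A"
    by (simp add: fun_eq_iff hnorm_def Anorm_def)
qed

text \<open>Symmetry makes \<open>u \<mapsto> \<langle>u, AKy\<rangle> / \<parallel>Ay\<parallel>\<close> pointwise bounded by \<open>\<parallel>Ku\<parallel>\<close>.\<close>
lemma A_symmetric_uniform_bound:
  assumes sym: "\<And>u v. ip (A (K u)) v = ip (A u) (K v)"
  shows "\<exists>C. \<forall>y u. A y \<noteq> 0 \<longrightarrow> cmod (ip u (A (K y))) \<le> C * hnorm ip u * hnorm ip (A y)"
proof -
  have pointwise: "cmod (ip u (A (K y))) \<le> hnorm ip (A y) * hnorm ip (K u)" for u y
  proof -
    have "cmod (ip u (A (K y))) = cmod (ip (A (K y)) u)"
      using inner_commute[of "A (K y)" u] by (simp only: complex_mod_cnj)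
    also have "\<dots> = cmod (ip (A y) (K u))"
      by (simp only: sym)
    also have "\<dots> \<le> hnorm ip (A y) * hnorm ip (K u)"
      by (rule norm_inner_le)
    finally show ?thesis .
  qed
  define \<phi> where "\<phi> y u = ip u (A (K y)) / of_real (hnorm ip (A y))" for y u
  have "\<exists>C. \<forall>y\<in>{y. A y \<noteq> 0}. \<forall>u. cmod (\<phi> y u) \<le> C * hnorm ip u"
  proof (rule uniform_boundedness)
    show "\<phi> y (u + v) = \<phi> y u + \<phi> y v" for y u v
      by (simp add: \<phi>_def inner_add_left add_divide_distrib)
    show "\<phi> y (sc (of_real a) u) = of_real a * \<phi> y u" for y a u
      by (simp add: \<phi>_def inner_scale_left)
    show "\<exists>C. \<forall>u. cmod (\<phi> y u) \<le> C * hnorm ip u" for y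
    proof (intro exI allI)
      fix u
      show "cmod (\<phi> y u) \<le> hnorm ip (A (K y)) / hnorm ip (A y) * hnorm ip u"
        using norm_inner_le[of u "A (K y)"]
        by (simp add: \<phi>_def norm_divide divide_right_mono mult.commute)
    qed
    show "\<exists>M. \<forall>y\<in>{y. A y \<noteq> 0}. cmod (\<phi> y u) \<le> M" for u
    proof (intro exI ballI)
      fix y
      assume "y \<in> {y. A y \<noteq> 0}"
      then show "cmod (\<phi> y u) \<le> hnorm ip (K u)"
        using pointwise[of u y] hnorm_pos[of "A y"] by (simp add: \<phi>_def norm_divide field_simps)
    qed
  qed
  then obtain C where C: "\<And>y u. A y \<noteq> 0 \<Longrightarrow> cmod (\<phi> y u) \<le> C * hnorm ip u"
    by blast
  have "cmod (ip u (A (K y))) \<le> C * hnorm ip u * hnorm ip (A y)" if "A y \<noteq> 0" for y u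
    using C[OF that, of u] hnorm_pos[OF that] by (simp add: \<phi>_def norm_divide field_simps)
  then show ?thesis
    by blast
qed

lemma A_symmetric_bounded_on_range:
  assumes sym: "\<And>u v. ip (A (K u)) v = ip (A u) (K v)"
  shows "\<exists>C\<ge>0. \<forall>y. hnorm ip (A (K y)) \<le> C * hnorm ip (A y)"
proof -
  obtain C where C: "\<And>y u. A y \<noteq> 0 \<Longrightarrow> cmod (ip u (A (K y))) \<le> C * hnorm ip u * hnorm ip (A y)"
    using A_symmetric_uniform_bound[OF sym] by blast
  have "hnorm ip (A (K y)) \<le> max C 0 * hnorm ip (A y)" for y
  proof (cases "A y = 0")
    case True
    then have "A (K y) = 0"
      using sym[of y] by (intro eq_0_if_inner_left_eq_0) simp
    then show ?thesis
      by simp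
  next
    case False
    have "hnorm ip (A (K y)) * hnorm ip (A (K y)) \<le> (C * hnorm ip (A y)) * hnorm ip (A (K y))"
      using C[OF False, of "A (K y)"] by (simp add: norm_inner_self power2_eq_square mult_ac)
    then have "hnorm ip (A (K y)) = 0 \<or> hnorm ip (A (K y)) \<le> C * hnorm ip (A y)"
      by (auto simp: mult_le_cancel_right less_le)
    moreover have "C * hnorm ip (A y) \<le> max C 0 * hnorm ip (A y)" "0 \<le> max C 0 * hnorm ip (A y)"
      by (simp_all add: mult_right_mono)
    ultimately show ?thesis
      by auto
  qed
  then show ?thesis
    by (intro exI[of _ "max C 0"]) auto
qed

lemma A_symmetric_imp_A_bounded:
  assumes sym: "\<And>u v. ip (A (K u)) v = ip (A u) (K v)"
  shows "A.hbounded K"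
proof -
  obtain C where C: "C \<ge> 0" "\<And>y. hnorm ip (A (K y)) \<le> C * hnorm ip (A y)"
    using A_symmetric_bounded_on_range[OF sym] by blast
  define L where "L = C + 1"
  have L: "L > 0"
    using C(1) by (simp add: L_def)
  have step: "hnorm ip (A (K y)) \<le> L * hnorm ip (A y)" for y
    using C(2)[of y] mult_right_mono[of C L "hnorm ip (A y)"] by (simp add: L_def)
  have orbit_A: "hnorm ip (A ((K ^^ m) y)) \<le> L ^ m * hnorm ip (A y)" for m y
  proof (induction m)
    case (Suc m)
    have "hnorm ip (A ((K ^^ Suc m) y)) \<le> L * hnorm ip (A ((K ^^ m) y))"
      using step[of "(K ^^ m) y"] by simp
    also have "\<dots> \<le> L * (L ^ m * hnorm ip (A y))"
      using Suc.IH L by (simp add: mult_left_mono)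
    finally show ?case
      by (simp add: mult.assoc)
  qed simp
  have "Anorm ip A (K x) \<le> L * Anorm ip A x" for x
  proof (rule A.hnorm_le_if_symmetric_orbit_bounded[OF sym L])
    fix m
    have "Anorm ip A ((K ^^ m) x) ^ 2 = Re (ip (A ((K ^^ m) x)) ((K ^^ m) x))"
      by (rule A.hnorm_sq)
    also have "\<dots> = Re (ip (A ((K ^^ m) ((K ^^ m) x))) x)"
      by (simp only: A.symmetric_funpow[OF sym])
    also have "\<dots> \<le> cmod (ip (A ((K ^^ (m + m)) x)) x)"
      by (simp only: funpow_add comp_apply complex_Re_le_cmod)
    also have "\<dots> \<le> hnorm ip (A ((K ^^ (m + m)) x)) * hnorm ip x"
      by (rule norm_inner_le)
    also have "\<dots> \<le> L ^ (m + m) * hnorm ip (A x) * hnorm ip x"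
      using orbit_A[of "m + m" x] by (simp add: mult_right_mono)
    also have "\<dots> = (hnorm ip (A x) * hnorm ip x) * (L ^ m)\<^sup>2"
      by (simp only: power_add power2_eq_square mult_ac)
    also have "\<dots> = (sqrt (hnorm ip (A x) * hnorm ip x) * L ^ m)\<^sup>2"
      by (simp only: power_mult_distrib real_sqrt_pow2 mult_nonneg_nonneg hnorm_nonneg)
    finally show "Anorm ip A ((K ^^ m) x) \<le> sqrt (hnorm ip (A x) * hnorm ip x) * L ^ m"
      by (rule power2_le_imp_le) (use L in simp)
  qed
  then show ?thesis
    using L by (auto simp: A.hbounded_def intro!: exI[of _ L])
qed

lemma BA_imp_linear_op: "T \<in> BA sc ip A \<Longrightarrow> linear_op T"
  by (auto simp: BA_def bounded_op_def linear_op_def)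

text \<open>The map \<open>K\<close> is \<open>T\<^sup>\<sharp>T\<close>, where the \<open>A\<close>-adjoint \<open>T\<^sup>\<sharp>\<close> is any solution \<open>W\<close> of
  \<open>AW = T\<^sup>*A\<close>.\<close>
lemma BA_imp_A_symmetric_factor:
  assumes "T \<in> BA sc ip A"
  obtains K where "\<And>u v. ip (A (K u)) v = ip (A u) (K v)" and "\<And>u v. ip (A (K u)) v = ip (A (T u)) (T v)"
proof -
  obtain T' where adjoint: "is_adjoint ip T T'" and range: "range (\<lambda>x. T' (A x)) \<subseteq> range A"
    using assms by (auto simp: BA_def)
  have adjoint': "ip (T' y) x = ip y (T x)" for x y
  proof -
    have "ip (T' y) x = cnj (ip x (T' y))"
      by (rule inner_commute)
    also have "ip x (T' y) = ip (T x) y"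
      using adjoint by (simp add: is_adjoint_def)
    also have "cnj (ip (T x) y) = ip y (T x)"
      by (rule inner_commute[symmetric])
    finally show ?thesis .
  qed
  have "\<forall>y. \<exists>z. A z = T' (A y)"
  proof
    fix y
    have "T' (A y) \<in> range A"
      using range by (simp add: image_subset_iff)
    then show "\<exists>z. A z = T' (A y)"
      by (metis rangeE)
  qed
  then obtain W where W: "\<forall>y. A (W y) = T' (A y)"
    by (rule choice[THEN exE])
  define K where "K x = W (T x)" for x
  have K: "ip (A (K u)) v = ip (A (T u)) (T v)" for u v
    by (simp add: K_def W adjoint')
  moreover have "ip (A (K u)) v = ip (A u) (K v)" for u v
    using inner_A_commute[of u "K v"] inner_A_commute[of "T u" "T v"] by (simp add: K)
  ultimately show ?thesis
    using that by blast
qed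

lemma BA_imp_A_bounded:
  assumes "T \<in> BA sc ip A"
  shows "A.hbounded T"
proof -
  obtain K where sym: "\<And>u v. ip (A (K u)) v = ip (A u) (K v)"
    and K: "\<And>u v. ip (A (K u)) v = ip (A (T u)) (T v)"
    using BA_imp_A_symmetric_factor[OF assms] by blast
  obtain L where L: "L \<ge> 0" "\<And>x. Anorm ip A (K x) \<le> L * Anorm ip A x"
    using A_symmetric_imp_A_bounded[OF sym] by (auto simp: A.hbounded_def)
  have "Anorm ip A (T x) \<le> sqrt L * Anorm ip A x" for x
  proof (rule power2_le_imp_le)
    have "Anorm ip A (T x) ^ 2 = Re (ip (A (K x)) x)"
      by (simp add: A.hnorm_sq K)
    also have "\<dots> \<le> Anorm ip A (K x) * Anorm ip A x"
      using A.norm_inner_le[of "K x" x] complex_Re_le_cmod order_trans by blast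
    also have "\<dots> \<le> L * Anorm ip A x * Anorm ip A x"
      using L(2)[of x] by (simp add: mult_right_mono)
    also have "\<dots> = (sqrt L * Anorm ip A x)\<^sup>2"
      using L(1) by (simp add: power_mult_distrib power2_eq_square)
    finally show "Anorm ip A (T x) ^ 2 \<le> (sqrt L * Anorm ip A x)\<^sup>2" .
  qed (use L in simp)
  then show ?thesis
    using L unfolding A.hbounded_def by (intro exI[of _ "sqrt L"]) auto
qed

end

section \<open>A-numerical radius and A-spectral radius\<close>

lemma funpow_Suc_compose_rotate:
  "((\<lambda>x. f (g x)) ^^ Suc n) x = f (((\<lambda>y. g (f y)) ^^ n) (g x))"
  by (induction n arbitrary: x) (simp_all add: funpow_swap1)

lemma LIMSEQ_root_Suc_mult_power:
  assumes c: "c > 0" and \<mu>: "\<mu> > 0"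
  shows "(\<lambda>n. root (Suc n) (c * \<mu> ^ n)) \<longlonglongrightarrow> \<mu>"
proof -
  have "root (Suc n) (c * \<mu> ^ n) = root (Suc n) c * (\<mu> / root (Suc n) \<mu>)" for n
  proof -
    have "root (Suc n) (\<mu> ^ n) = root (Suc n) (\<mu> ^ Suc n / \<mu>)"
      using \<mu> by simp
    also have "\<dots> = root (Suc n) (\<mu> ^ Suc n) / root (Suc n) \<mu>"
      by (rule real_root_divide)
    also have "root (Suc n) (\<mu> ^ Suc n) = \<mu>"
      using \<mu> by (intro real_root_power_cancel) auto
    finally show ?thesis
      by (simp add: real_root_mult)
  qed
  moreover have "(\<lambda>n. root (Suc n) c * (\<mu> / root (Suc n) \<mu>)) \<longlonglongrightarrow> 1 * (\<mu> / 1)"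
    using LIMSEQ_Suc[OF LIMSEQ_root_const[OF c]] LIMSEQ_Suc[OF LIMSEQ_root_const[OF \<mu>]]
    by (intro tendsto_intros) simp_all
  ultimately show ?thesis
    by simp
qed
context positive_weight
begin

lemma exists_Anorm_one:
  assumes "\<exists>x. A x \<noteq> 0"
  shows "\<exists>x. Anorm ip A x = 1"
proof -
  obtain x where "Anorm ip A x \<noteq> 0"
  proof (rule ccontr)
    assume "\<not> thesis"
    then have "Anorm ip A x = 0" for x
      using that by blast
    then have "A x = 0" for x
      using A.norm_inner_le[of x] by (intro eq_0_if_inner_left_eq_0) (metis mult_zero_left norm_le_zero_iff)
    then show False
      using assms by blast
  qed
  then have "Anorm ip A (sc (of_real (1 / Anorm ip A x)) x) = 1"
    by (simp add: A.hnorm_scale norm_divide)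
  then show ?thesis
    by blast
qed

lemma Anumrad_bounds:
  assumes unit: "\<exists>x. Anorm ip A x = 1" and B: "linear_op B" and bounded: "A.hbounded B"
  shows "0 \<le> Anumrad ip A B" and "A.numrad_le B (Anumrad ip A B)"
proof -
  define V where "V = {cmod (ip (A (B x)) x) | x. Anorm ip A x = 1}"
  obtain L where L: "\<And>x. Anorm ip A (B x) \<le> L * Anorm ip A x"
    using bounded by (auto simp: A.hbounded_def)
  have le: "cmod (ip (A (B x)) x) \<le> Anorm ip A (B x) * Anorm ip A x" for x
    by (rule A.norm_inner_le)
  have "bdd_above V"
  proof (rule bdd_aboveI)
    fix v
    assume "v \<in> V"
    then obtain x where "v = cmod (ip (A (B x)) x)" and "Anorm ip A x = 1"
      by (auto simp: V_def)
    then show "v \<le> L"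
      using le[of x] L[of x] by simp
  qed
  then have upper: "cmod (ip (A (B x)) x) \<le> Anumrad ip A B" if "Anorm ip A x = 1" for x
    using that by (auto simp: Anumrad_def V_def[symmetric] intro!: cSup_upper) (auto simp: V_def)
  show "0 \<le> Anumrad ip A B"
    using unit upper norm_ge_zero order_trans by blast
  show "A.numrad_le B (Anumrad ip A B)"
    using B upper by (rule A.numrad_le_if_unit_sphere_bound)
qed

lemma Aopnorm_bounds:
  assumes unit: "\<exists>x. Anorm ip A x = 1" and C: "\<And>x. Anorm ip A (B x) \<le> C * Anorm ip A x"
  shows "0 \<le> Aopnorm ip A B" and "Aopnorm ip A B \<le> C"
proof -
  define V where "V = {Anorm ip A (B x) | x. Anorm ip A x = 1}"
  have ne: "V \<noteq> {}"
    using unit by (auto simp: V_def)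
  have ub: "v \<le> C" if v: "v \<in> V" for v
  proof -
    obtain x where "v = Anorm ip A (B x)" and "Anorm ip A x = 1"
      using v unfolding V_def by blast
    then show ?thesis
      using C[of x] by simp
  qed
  obtain x1 where "Anorm ip A x1 = 1"
    using unit by blast
  then have "Anorm ip A (B x1) \<le> Sup V"
    using ub by (intro cSup_upper bdd_aboveI) (auto simp: V_def)
  then show "0 \<le> Aopnorm ip A B"
    unfolding Aopnorm_def V_def[symmetric] using A.hnorm_nonneg order_trans by blast
  show "Aopnorm ip A B \<le> C"
    unfolding Aopnorm_def V_def[symmetric] using ne ub by (rule cSup_least)
qed

lemma Aspecrad_le:
  assumes unit: "\<exists>x. Anorm ip A x = 1" and "C \<ge> 0" and "\<mu> > 0"
    and powers: "\<And>n x. Anorm ip A ((T ^^ Suc n) x) \<le> C * \<mu> ^ n * Anorm ip A x"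
  shows "Aspecrad ip A T \<le> \<mu>"
proof -
  define V where "V = {root n (Aopnorm ip A (T ^^ n)) | n. n \<ge> 1}"
  have bdd: "bdd_below V"
  proof (rule bdd_belowI)
    fix v
    assume "v \<in> V"
    then obtain n where "n \<ge> 1" and v: "v = root n (Aopnorm ip A (T ^^ n))"
      by (auto simp: V_def)
    then obtain m where m: "n = Suc m"
      by (cases n) auto
    show "0 \<le> v"
      unfolding v m by (intro real_root_ge_zero Aopnorm_bounds(1)[OF unit powers[of m]])
  qed
  have "Inf V \<le> root (Suc n) ((C + 1) * \<mu> ^ n)" for n
  proof (rule cInf_lower2)
    show "root (Suc n) (Aopnorm ip A (T ^^ Suc n)) \<in> V"
      unfolding V_def by (intro CollectI exI[of _ "Suc n"]) simp
    have "Aopnorm ip A (T ^^ Suc n) \<le> C * \<mu> ^ n"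
      by (rule Aopnorm_bounds(2)[OF unit powers])
    also have "\<dots> \<le> (C + 1) * \<mu> ^ n"
      using \<open>\<mu> > 0\<close> by simp
    finally show "root (Suc n) (Aopnorm ip A (T ^^ Suc n)) \<le> root (Suc n) ((C + 1) * \<mu> ^ n)"
      by (simp only: real_root_le_iff zero_less_Suc)
  qed (rule bdd)
  moreover have "(\<lambda>n. root (Suc n) ((C + 1) * \<mu> ^ n)) \<longlonglongrightarrow> \<mu>"
    using assms by (intro LIMSEQ_root_Suc_mult_power) simp_all
  ultimately show ?thesis
    unfolding Aspecrad_def V_def[symmetric] by (intro LIMSEQ_le_const) auto
qed

lemma Aspecrad_le_numrad_of_factorization:
  fixes X :: "'e::ab_group_add \<Rightarrow> 'h" and Y :: "'h \<Rightarrow> 'e"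
  assumes unit: "\<exists>x. A x \<noteq> 0" and E: "semi_inner sce ipe"
    and linear: "semi_inner.linear_op sce (\<lambda>p. Y (X p))"
    and numrad: "semi_inner.numrad_le ipe (\<lambda>p. Y (X p)) w" and "w \<ge> 0"
    and X_bounded: "\<exists>LX\<ge>0. \<forall>q. Anorm ip A (X q) \<le> LX * hnorm ipe q"
    and Y_bounded: "\<exists>LY\<ge>0. \<forall>x. hnorm ipe (Y x) \<le> LY * Anorm ip A x"
  shows "Aspecrad ip A (\<lambda>x. X (Y x)) \<le> w"
proof (rule field_le_epsilon)
  interpret E: semi_inner sce ipe
    by (rule E)
  obtain LX LY where "LX \<ge> 0" and X: "\<And>q. Anorm ip A (X q) \<le> LX * hnorm ipe q"
    and "LY \<ge> 0" and Y: "\<And>x. hnorm ipe (Y x) \<le> LY * Anorm ip A x"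
    using X_bounded Y_bounded by blast
  fix \<epsilon> :: real
  assume "\<epsilon> > 0"
  then have \<mu>: "w + \<epsilon> > 0"
    using \<open>w \<ge> 0\<close> by simp
  have "E.numrad_le (\<lambda>p. Y (X p)) (w + \<epsilon>)"
    using numrad by (rule E.numrad_le_mono) (use \<open>\<epsilon> > 0\<close> in simp)
  then have M: "hnorm ipe (((\<lambda>p. Y (X p)) ^^ n) q) \<le> 2 * (w + \<epsilon>) ^ n * hnorm ipe q" for n q
    using linear \<mu> by (intro E.hnorm_funpow_le)
  have powers: "Anorm ip A (((\<lambda>x. X (Y x)) ^^ Suc n) x) \<le> (2 * LX * LY) * (w + \<epsilon>) ^ n * Anorm ip A x"
    for n x
  proof -
    have "Anorm ip A (((\<lambda>x. X (Y x)) ^^ Suc n) x) = Anorm ip A (X (((\<lambda>p. Y (X p)) ^^ n) (Y x)))"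
      by (simp only: funpow_Suc_compose_rotate)
    also have "\<dots> \<le> LX * (2 * (w + \<epsilon>) ^ n * hnorm ipe (Y x))"
      using X M \<open>LX \<ge> 0\<close> by (meson mult_left_mono order_trans)
    also have "\<dots> \<le> LX * (2 * (w + \<epsilon>) ^ n * (LY * Anorm ip A x))"
      using Y \<mu> \<open>LX \<ge> 0\<close> by (intro mult_left_mono) simp_all
    finally show ?thesis
      by (simp add: mult_ac)
  qed
  show "Aspecrad ip A (\<lambda>x. X (Y x)) \<le> w + \<epsilon>"
    using \<open>LX \<ge> 0\<close> \<open>LY \<ge> 0\<close> \<mu> by (intro Aspecrad_le[OF exists_Anorm_one[OF unit] _ _ powers]) simp_all
qed
end

theorem corollary2p10:
  fixes sc :: "complex \<Rightarrow> 'h::ab_group_add \<Rightarrow> 'h"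
    and ip :: "'h \<Rightarrow> 'h \<Rightarrow> complex"
    and A P Q R S :: "'h \<Rightarrow> 'h"
  assumes "complex_hilbert sc ip"
    and "positive_op sc ip A" and "\<exists>x. A x \<noteq> 0"
    and "P \<in> BA sc ip A" and "Q \<in> BA sc ip A" and "R \<in> BA sc ip A" and "S \<in> BA sc ip A"
  shows "Aspecrad ip A (\<lambda>x. P (Q x) + R (S x))
    \<le> (Anumrad ip A (\<lambda>x. Q (P x)) + Anumrad ip A (\<lambda>x. S (R x))) / 2
      + sqrt ((Anumrad ip A (\<lambda>x. Q (P x)) - Anumrad ip A (\<lambda>x. S (R x)))\<^sup>2
              + (Anumrad ip A (\<lambda>x. Q (R x) + S (P x)) + Anumrad ip A (\<lambda>x. Q (R x) - S (P x)))\<^sup>2) / 2"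
proof -
  interpret positive_weight sc ip A
    by unfold_locales (fact assms)+
  have unit: "\<exists>x. Anorm ip A x = 1"
    using exists_Anorm_one assms(3) .
  note P = BA_imp_linear_op[OF assms(4)] BA_imp_A_bounded[OF assms(4)]
    and Q = BA_imp_linear_op[OF assms(5)] BA_imp_A_bounded[OF assms(5)]
    and R = BA_imp_linear_op[OF assms(6)] BA_imp_A_bounded[OF assms(6)]
    and S = BA_imp_linear_op[OF assms(7)] BA_imp_A_bounded[OF assms(7)]
  note QR = linear_op_compose[OF Q(1) R(1)] A.hbounded_compose[OF Q(2) R(2)]
    and SP = linear_op_compose[OF S(1) P(1)] A.hbounded_compose[OF S(2) P(2)]
  note QP = Anumrad_bounds[OF unit linear_op_compose[OF Q(1) P(1)] A.hbounded_compose[OF Q(2) P(2)]]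
    and SR = Anumrad_bounds[OF unit linear_op_compose[OF S(1) R(1)] A.hbounded_compose[OF S(2) R(2)]]
    and sum = Anumrad_bounds[OF unit linear_op_plus[OF QR(1) SP(1)] A.hbounded_plus_minus(1)[OF QR(2) SP(2)]]
    and diff = Anumrad_bounds[OF unit linear_op_minus[OF QR(1) SP(1)] A.hbounded_plus_minus(2)[OF QR(2) SP(2)]]
  show ?thesis
    using Aspecrad_le_numrad_of_factorization[where X = "\<lambda>q. P (fst q) + R (snd q)" and Y = "\<lambda>x. (Q x, S x)",
        OF assms(3) A.semi_inner_dsum A.linear_op_block[OF P(1) Q(1) R(1) S(1)]
        A.numrad_le_block[OF P(1) Q(1) R(1) S(1) QP(2) SR(2) sum(2) diff(2) sum(1) diff(1)] _
        A.hbounded_block_row[OF P(2) R(2)] A.hbounded_block_column[OF Q(2) S(2)]] QP(1) SR(1)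
    by simp
qed

end
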